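(* Let $G$ be split with root system of type $F_4$, simple roots $\alpha_1,\alpha_2,\alpha_3,\alpha_4$ in Bourbaki labelling ($\alpha_1,\alpha_2$ long, $\alpha_3,\alpha_4$ short), and let $\widetilde G$ be any $n$-fold Brylinski--Deligne cover associated with a Weyl-invariant quadratic form $Q$. If $n_{\alpha_1}=2n_{\alpha_4}$, then $$f_X(\Phi^\vee_+)=f_Y(\Phi_+)=\frac{1}{n_{\alpha_4}}[1,8]\cup\frac{1}{2n_{\alpha_4}}\{1,3,5,7,9,11\}.$$ If $n_\alpha$ is constant on $\alpha\in\Delta$, then $f_X(\Phi^\vee_+)=f_Y(\Phi_+)=\frac{1}{n_\alpha}[1,11]$.
   Context: $[a,b]$ denotes $\{a,\dots,b\}$. Notation: $\omega_\alpha$ fundamental weights, $\omega^\vee_\alpha$ fundamental coweights, $\rho^\vee=\sum_{\alpha\in\Delta}\omega_\alpha^\vee$. $B_Q(y,z)=Q(y+z)-Q(y)-Q(z)$, $Y_{Q,n}=\{y\in Y:B_Q(y,z)\in n\mathbf Z\ \forall z\in Y\}$, $n_\alpha=n/\gcd(n,Q(\alpha^\vee))$, and $\tilde n_\alpha$ ($\alpha\in\Phi$) defined by $\mathbf Z\alpha^\vee\cap Y_{Q,n}=\mathbf Z\tilde n_\alpha\alpha^\vee$ (for type $F_4$ one has $\tilde n_\alpha=n_\alpha$). $f_X:\Phi_+^\vee\to\mathbf Q$, $f_X(\beta^\vee)=\sum_{\alpha\in\Delta}\langle\omega_\alpha/\tilde n_\alpha,\beta^\vee\rangle$; $f_Y:\Phi_+\to\mathbf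 Q$, $f_Y(\beta)=\langle\rho^\vee,\beta\rangle/\tilde n_\beta$. *)

theory Defs
  imports Main "HOL.Rat"
begin

text \<open>Since F4 is both simply connected and adjoint, the cocharacter lattice Y is the
  coroot lattice.  Elements of X-side roots are written in coordinates w.r.t. the
  simple roots alpha_1..alpha_4, elements of Y in coordinates w.r.t. the simple
  coroots alpha_1^vee..alpha_4^vee; vectors are functions nat => int supported on 1..4.\<close>

type_synonym vec = "nat \<Rightarrow> int"

definition v4 :: "int \<Rightarrow> int \<Rightarrow> int \<Rightarrow> int \<Rightarrow> vec" where
  "v4 a b c d = (\<lambda>i. if i = 1 then a else if i = 2 then b else if i = 3 then c
                      else if i = 4 then d else 0)"

definition vadd :: "vec \<Rightarrow> vec \<Rightarrow> vec" where
  "vadd y z = (\<lambda>i. y i + z i)"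

definition smul :: "int \<Rightarrow> vec \<Rightarrow> vec" where
  "smul k y = (\<lambda>i. k * y i)"

definition Ylat :: "vec set" where
  "Ylat = {y. \<forall>i. i \<notin> {1..4} \<longrightarrow> y i = 0}"

definition F4_pos_roots :: "vec set" where
  "F4_pos_roots = set
    [v4 1 0 0 0, v4 0 1 0 0, v4 1 1 0 0, v4 0 1 2 0, v4 1 1 2 0, v4 1 2 2 0,
     v4 0 1 2 2, v4 1 1 2 2, v4 1 2 2 2, v4 1 2 4 2, v4 1 3 4 2, v4 2 3 4 2,
     v4 0 0 1 0, v4 0 0 0 1, v4 0 0 1 1, v4 0 1 1 0, v4 1 1 1 0, v4 0 1 1 1,
     v4 1 1 1 1, v4 0 1 2 1, v4 1 1 2 1, v4 1 2 2 1, v4 1 2 3 1, v4 1 2 3 2]"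

definition F4_roots :: "vec set" where
  "F4_roots = F4_pos_roots \<union> (\<lambda>a. smul (-1) a) ` F4_pos_roots"

definition simple_root :: "nat \<Rightarrow> vec" where
  "simple_root i = (\<lambda>j. if j = i then 1 else 0)"

text \<open>gram i j = 2 (alpha_i, alpha_j), normalised so that long roots have (a,a) = 2.\<close>
definition gram :: "nat \<Rightarrow> nat \<Rightarrow> int" where
  "gram i j =
    (if i = j then (if i \<le> 2 then 4 else 2)
     else if {i, j} = {1, 2} then -2
     else if {i, j} = {2, 3} then -2
     else if {i, j} = {3, 4} then -1 else 0)"

definition rip :: "vec \<Rightarrow> vec \<Rightarrow> int" where
  "rip a b = (\<Sum>i\<in>{1..4}. \<Sum>j\<in>{1..4}. a i * b j * gram i j)"

text \<open>Coroot a^vee = 2a/(a,a), in simple-coroot coordinates.\<close>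
definition coroot :: "vec \<Rightarrow> vec" where
  "coroot a = (\<lambda>i. a i * gram i i div rip a a)"

text \<open>Pairing <a, y> of a root a (simple-root coordinates) with y in Y
  (simple-coroot coordinates); <alpha_i, alpha_j^vee> = 2(alpha_i,alpha_j)/(alpha_j,alpha_j).\<close>
definition pair :: "vec \<Rightarrow> vec \<Rightarrow> int" where
  "pair a y = (\<Sum>i\<in>{1..4}. \<Sum>j\<in>{1..4}. a i * y j * (2 * gram i j div gram j j))"

definition refl :: "vec \<Rightarrow> vec \<Rightarrow> vec" where
  "refl a y = (\<lambda>i. y i - pair a y * coroot a i)"

definition BQ :: "(vec \<Rightarrow> int) \<Rightarrow> vec \<Rightarrow> vec \<Rightarrow> int" where
  "BQ Q y z = Q (vadd y z) - Q y - Q z"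

definition quadratic_form :: "(vec \<Rightarrow> int) \<Rightarrow> bool" where
  "quadratic_form Q \<longleftrightarrow>
     (\<forall>y\<in>Ylat. \<forall>k. Q (smul k y) = k ^ 2 * Q y) \<and>
     (\<forall>y\<in>Ylat. \<forall>z\<in>Ylat. \<forall>w\<in>Ylat. BQ Q (vadd y z) w = BQ Q y w + BQ Q z w)"

definition weyl_invariant :: "(vec \<Rightarrow> int) \<Rightarrow> bool" where
  "weyl_invariant Q \<longleftrightarrow> (\<forall>a\<in>F4_roots. \<forall>y\<in>Ylat. Q (refl a y) = Q y)"

definition YQn :: "(vec \<Rightarrow> int) \<Rightarrow> nat \<Rightarrow> vec set" where
  "YQn Q n = {y \<in> Ylat. \<forall>z\<in>Ylat. int n dvd BQ Q y z}"

definition n_al :: "(vec \<Rightarrow> int) \<Rightarrow> nat \<Rightarrow> vec \<Rightarrow> nat" where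
  "n_al Q n a = nat (int n div gcd (int n) (Q (coroot a)))"

definition n_til :: "(vec \<Rightarrow> int) \<Rightarrow> nat \<Rightarrow> vec \<Rightarrow> nat" where
  "n_til Q n a = (LEAST k::nat. 0 < k \<and> smul (int k) (coroot a) \<in> YQn Q n)"

text \<open>f_X(beta^vee) = sum_i <omega_i / tilde n_{alpha_i}, beta^vee>; the argument is the
  coroot beta^vee in simple-coroot coordinates, so <omega_i, beta^vee> = its i-th coordinate.\<close>
definition fX :: "(vec \<Rightarrow> int) \<Rightarrow> nat \<Rightarrow> vec \<Rightarrow> rat" where
  "fX Q n bv = (\<Sum>i\<in>{1..4}. of_int (bv i) / of_nat (n_til Q n (simple_root i)))"

text \<open>f_Y(beta) = <rho^vee, beta> / tilde n_beta; <rho^vee, beta> is the height of beta.\<close>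
definition fY :: "(vec \<Rightarrow> int) \<Rightarrow> nat \<Rightarrow> vec \<Rightarrow> rat" where
  "fY Q n b = of_int (\<Sum>i\<in>{1..4}. b i) / of_nat (n_til Q n b)"

end

theory Submission
  imports Defs
begin

(* Weyl invariance pins Q down.  Expanding Q(s_a y) = Q(y - <a,y> a^vee) gives
   B_Q(a^vee, y) = <a,y> Q(a^vee) for every root a, so Q is Q(alpha_1^vee) times one fixed form and
   Q(a^vee) equals Q(alpha_1^vee) or 2 Q(alpha_1^vee) according as a is long or short.  Every positive
   root pairs to +-1 with some simple coroot, hence k a^vee lies in Y_{Q,n} iff n divides k Q(a^vee);
   that is, tilde n_a = n_a.  If n_{alpha_1} = 2 n_{alpha_4}, then f_X(a^vee) = f_Y(a) for every
   positive root, and f_Y takes the values height(a)/n_{alpha_4} on short roots and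
   height(a)/(2 n_{alpha_4}) on long ones.  If all n_alpha agree, f_X and f_Y are the heights of the
   positive coroots and of the positive roots divided by n_alpha, and both sets of heights are [1,11]. *)

lemma one_to_four: "{1..4::nat} = {1, 2, 3, 4}"
  by auto

lemma sum_1_to_4: "(\<Sum>i\<in>{1..4::nat}. f i) = f 1 + f 2 + f 3 + f 4"
  unfolding one_to_four by (simp add: add.assoc)

lemma v4_apply [simp]:
  "v4 a b c d 1 = a" "v4 a b c d (Suc 0) = a" "v4 a b c d 2 = b" "v4 a b c d 3 = c" "v4 a b c d 4 = d"
  by (simp_all add: v4_def)

lemma simple_root_v4:
  "simple_root 1 = v4 1 0 0 0" "simple_root 2 = v4 0 1 0 0"
  "simple_root 3 = v4 0 0 1 0" "simple_root 4 = v4 0 0 0 1"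
  by (auto simp: simple_root_def v4_def)

lemma rip_self_v4:
  "rip (v4 a b c d) (v4 a b c d) = 4*a^2 + 4*b^2 + 2*c^2 + 2*d^2 - 4*a*b - 4*b*c - 2*c*d"
  unfolding rip_def sum_1_to_4 by (simp add: gram_def doubleton_eq_iff algebra_simps power2_eq_square)

lemma coroot_v4:
  "coroot (v4 a b c d) =
     (let r = rip (v4 a b c d) (v4 a b c d) in v4 (4*a div r) (4*b div r) (2*c div r) (2*d div r))"
proof -
  have "gram i i = (if i \<le> 2 then 4 else 2)" for i by (simp add: gram_def)
  then show ?thesis by (intro ext) (simp add: coroot_def v4_def Let_def mult.commute)
qed

lemma pair_Cartan:
  "pair a y = y 1 * (2*a 1 - a 2) + y 2 * (2*a 2 - a 1 - a 3) + y 3 * (2*a 3 - 2*a 2 - a 4)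
     + y 4 * (2*a 4 - a 3)"
  unfolding pair_def sum_1_to_4 by (simp add: gram_def doubleton_eq_iff algebra_simps)

lemma vadd_in_Ylat: "y \<in> Ylat \<Longrightarrow> z \<in> Ylat \<Longrightarrow> vadd y z \<in> Ylat"
  by (simp add: Ylat_def vadd_def)

lemma smul_in_Ylat: "y \<in> Ylat \<Longrightarrow> smul k y \<in> Ylat"
  by (simp add: Ylat_def smul_def)

lemma simple_root_in_Ylat: "i \<in> {1..4} \<Longrightarrow> simple_root i \<in> Ylat"
  by (auto simp: Ylat_def simple_root_def)

lemma coroot_in_Ylat: "a \<in> Ylat \<Longrightarrow> coroot a \<in> Ylat"
  by (simp add: Ylat_def coroot_def)

lemma F4_pos_roots_in_Ylat: "a \<in> F4_pos_roots \<Longrightarrow> a \<in> Ylat"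
  unfolding F4_pos_roots_def by (auto simp: Ylat_def v4_def)

lemma Ylat_eq_sum_simple_roots:
  assumes "y \<in> Ylat"
  shows "y = vadd (smul (y 1) (simple_root 1)) (vadd (smul (y 2) (simple_root 2))
               (vadd (smul (y 3) (simple_root 3)) (smul (y 4) (simple_root 4))))"
proof
  fix i
  show "y i = vadd (smul (y 1) (simple_root 1)) (vadd (smul (y 2) (simple_root 2))
               (vadd (smul (y 3) (simple_root 3)) (smul (y 4) (simple_root 4)))) i"
    using assms by (cases "i \<in> {1, 2, 3, 4}") (auto simp: vadd_def smul_def simple_root_def Ylat_def)
qed

lemma simple_root_in_F4_pos_roots: "i \<in> {1..4} \<Longrightarrow> simple_root i \<in> F4_pos_roots"
  using simple_root_v4 unfolding one_to_four by (auto simp: F4_pos_roots_def)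

lemma coroot_simple_root: "i \<in> {1..4} \<Longrightarrow> coroot (simple_root i) = simple_root i"
  using simple_root_v4 unfolding one_to_four by (auto simp: coroot_v4 rip_self_v4)

definition long_root :: "vec \<Rightarrow> bool" where
  "long_root a \<longleftrightarrow> rip a a = 4"

definition Q_F4 :: "vec \<Rightarrow> int" where
  "Q_F4 y = (y 1)^2 + (y 2)^2 + 2*(y 3)^2 + 2*(y 4)^2 - y 1 * y 2 - 2 * y 2 * y 3 - 2 * y 3 * y 4"

lemma pair_coroot_self: "a \<in> F4_pos_roots \<Longrightarrow> pair a (coroot a) = 2"
  unfolding F4_pos_roots_def by (auto simp: pair_Cartan coroot_v4 rip_self_v4)

lemma pair_simple_coroot_unit: "a \<in> F4_pos_roots \<Longrightarrow> \<exists>j\<in>{1..4}. \<bar>pair a (simple_root j)\<bar> = 1"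
  unfolding F4_pos_roots_def one_to_four by (auto simp: pair_Cartan simple_root_def)

lemma Q_F4_coroot: "a \<in> F4_pos_roots \<Longrightarrow> Q_F4 (coroot a) = (if long_root a then 1 else 2)"
  unfolding F4_pos_roots_def by (auto simp: Q_F4_def long_root_def coroot_v4 rip_self_v4)

lemma BQ_commute: "BQ Q y z = BQ Q z y"
  by (simp add: BQ_def vadd_def add.commute)

lemma Q_vadd: "Q (vadd y z) = Q y + Q z + BQ Q y z"
  by (simp add: BQ_def)

lemma BQ_add_left:
  "quadratic_form Q \<Longrightarrow> y \<in> Ylat \<Longrightarrow> z \<in> Ylat \<Longrightarrow> w \<in> Ylat \<Longrightarrow>
     BQ Q (vadd y z) w = BQ Q y w + BQ Q z w"
  by (simp add: quadratic_form_def)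

lemma BQ_smul_left:
  assumes Q: "quadratic_form Q" and "y \<in> Ylat" "w \<in> Ylat"
  shows "BQ Q (smul k y) w = k * BQ Q y w"
proof (induction k rule: int_induct[where k = 0])
  case base
  have "smul 0 y = vadd (smul 0 y) (smul 0 y)" by (simp add: smul_def vadd_def)
  then have "BQ Q (smul 0 y) w = BQ Q (smul 0 y) w + BQ Q (smul 0 y) w"
    using BQ_add_left[OF Q _ _ \<open>w \<in> Ylat\<close>] smul_in_Ylat[OF \<open>y \<in> Ylat\<close>] by metis
  then show ?case by simp
next
  case (step1 i)
  have "smul (i + 1) y = vadd (smul i y) y" by (simp add: smul_def vadd_def algebra_simps)
  then show ?case using step1 BQ_add_left[OF Q smul_in_Ylat assms(2,3)] assms(2)
    by (simp add: algebra_simps)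
next
  case (step2 i)
  have "smul i y = vadd (smul (i - 1) y) y" by (simp add: smul_def vadd_def algebra_simps)
  then show ?case using step2 BQ_add_left[OF Q smul_in_Ylat assms(2,3)] assms(2)
    by (simp add: algebra_simps)
qed

lemma BQ_smul_right:
  "quadratic_form Q \<Longrightarrow> y \<in> Ylat \<Longrightarrow> w \<in> Ylat \<Longrightarrow> BQ Q y (smul k w) = k * BQ Q y w"
  using BQ_smul_left BQ_commute by metis

lemma BQ_self: "quadratic_form Q \<Longrightarrow> y \<in> Ylat \<Longrightarrow> BQ Q y y = 2 * Q y"
proof -
  assume "quadratic_form Q" "y \<in> Ylat"
  then have "Q (smul 2 y) = 4 * Q y" by (simp add: quadratic_form_def)
  moreover have "vadd y y = smul 2 y" by (simp add: vadd_def smul_def)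
  ultimately show ?thesis by (simp add: BQ_def)
qed

lemma BQ_expand_left:
  assumes Q: "quadratic_form Q" and "y \<in> Ylat" "z \<in> Ylat"
  shows "BQ Q y z = y 1 * BQ Q (simple_root 1) z + y 2 * BQ Q (simple_root 2) z
                  + y 3 * BQ Q (simple_root 3) z + y 4 * BQ Q (simple_root 4) z"
proof -
  have e: "smul (y i) (simple_root i) \<in> Ylat" if "i \<in> {1..4}" for i
    using that by (intro smul_in_Ylat simple_root_in_Ylat)
  show ?thesis
    apply (subst Ylat_eq_sum_simple_roots[OF \<open>y \<in> Ylat\<close>])
    using assms e by (simp add: BQ_add_left vadd_in_Ylat BQ_smul_left simple_root_in_Ylat)
qed

section \<open>Weyl-invariant quadratic forms\<close>

lemma pair_vadd: "pair a (vadd y z) = pair a y + pair a z"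
  by (simp add: pair_Cartan vadd_def algebra_simps)

lemma refl_eq_vadd: "refl a y = vadd y (smul (- pair a y) (coroot a))"
  by (simp add: refl_def vadd_def smul_def)

lemma weyl_invariant_pair_identity:
  assumes Q: "quadratic_form Q" and W: "weyl_invariant Q"
    and a: "a \<in> F4_pos_roots" and y: "y \<in> Ylat"
  shows "pair a y * (pair a y * Q (coroot a) - BQ Q (coroot a) y) = 0"
proof -
  define m where "m = pair a y"
  have c: "coroot a \<in> Ylat" using a by (intro coroot_in_Ylat F4_pos_roots_in_Ylat)
  have "a \<in> F4_roots" using a by (simp add: F4_roots_def)
  then have "Q y = Q (refl a y)" using W y by (simp add: weyl_invariant_def)
  also have "\<dots> = Q y + Q (smul (- m) (coroot a)) + BQ Q y (smul (- m) (coroot a))"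
    by (simp add: refl_eq_vadd Q_vadd m_def)
  also have "\<dots> = Q y + m * (m * Q (coroot a) - BQ Q (coroot a) y)"
  proof -
    have "Q (smul (- m) (coroot a)) = m^2 * Q (coroot a)"
      using Q c by (simp add: quadratic_form_def)
    moreover have "BQ Q y (smul (- m) (coroot a)) = - m * BQ Q (coroot a) y"
      using BQ_smul_right[OF Q y c] BQ_commute by metis
    ultimately show ?thesis by (simp add: algebra_simps power2_eq_square)
  qed
  finally show ?thesis by (simp add: m_def)
qed

lemma BQ_coroot_left:
  assumes Q: "quadratic_form Q" and W: "weyl_invariant Q"
    and a: "a \<in> F4_pos_roots" and y: "y \<in> Ylat"
  shows "BQ Q (coroot a) y = pair a y * Q (coroot a)"
proof (cases "pair a y = 0")
  case True
  \<comment> \<open>the identity is empty for y itself; apply it to y + a^vee, which pairs to 2 with a\<close>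
  have c: "coroot a \<in> Ylat" using a by (intro coroot_in_Ylat F4_pos_roots_in_Ylat)
  have "pair a (vadd y (coroot a)) = 2" using True pair_coroot_self[OF a] by (simp add: pair_vadd)
  then have "BQ Q (coroot a) (vadd y (coroot a)) = 2 * Q (coroot a)"
    using weyl_invariant_pair_identity[OF Q W a vadd_in_Ylat[OF y c]] by simp
  moreover have "BQ Q (coroot a) (vadd y (coroot a)) = BQ Q (coroot a) y + 2 * Q (coroot a)"
    using BQ_add_left[OF Q y c c] BQ_self[OF Q c] BQ_commute by metis
  ultimately show ?thesis using True by simp
next
  case False
  then show ?thesis using weyl_invariant_pair_identity[OF Q W a y] by simp
qed

lemma BQ_simple_coroot_left:
  assumes "quadratic_form Q" "weyl_invariant Q" "i \<in> {1..4}" "y \<in> Ylat"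
  shows "BQ Q (simple_root i) y = pair (simple_root i) y * Q (simple_root i)"
  using BQ_coroot_left[OF assms(1,2) simple_root_in_F4_pos_roots[OF assms(3)] assms(4)]
  by (simp add: coroot_simple_root[OF assms(3)])

lemma Q_simple_coroots:
  assumes Q: "quadratic_form Q" and W: "weyl_invariant Q"
  shows "Q (simple_root 2) = Q (simple_root 1)" "Q (simple_root 3) = 2 * Q (simple_root 1)"
    "Q (simple_root 4) = 2 * Q (simple_root 1)"
proof -
  have B: "pair (simple_root i) (simple_root j) * Q (simple_root i)
         = pair (simple_root j) (simple_root i) * Q (simple_root j)"
    if "i \<in> {1..4}" "j \<in> {1..4}" for i j
    using BQ_simple_coroot_left[OF Q W that(1) simple_root_in_Ylat[OF that(2)]]
      BQ_simple_coroot_left[OF Q W that(2) simple_root_in_Ylat[OF that(1)]] BQ_commute by metis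
  show "Q (simple_root 2) = Q (simple_root 1)" using B[of 1 2] by (simp add: pair_Cartan simple_root_def)
  moreover have "Q (simple_root 3) = 2 * Q (simple_root 2)" using B[of 2 3] by (simp add: pair_Cartan simple_root_def)
  moreover have "Q (simple_root 4) = Q (simple_root 3)" using B[of 3 4] by (simp add: pair_Cartan simple_root_def)
  ultimately show "Q (simple_root 3) = 2 * Q (simple_root 1)" "Q (simple_root 4) = 2 * Q (simple_root 1)"
    by simp_all
qed

lemma Q_eq_Q_F4:
  assumes Q: "quadratic_form Q" and W: "weyl_invariant Q" and y: "y \<in> Ylat"
  shows "Q y = Q (simple_root 1) * Q_F4 y"
proof -
  note B = BQ_simple_coroot_left[OF Q W _ y]
  have "2 * Q y = BQ Q y y" using BQ_self[OF Q y] by simp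
  also have "\<dots> = y 1 * BQ Q (simple_root 1) y + y 2 * BQ Q (simple_root 2) y
                  + y 3 * BQ Q (simple_root 3) y + y 4 * BQ Q (simple_root 4) y"
    by (rule BQ_expand_left[OF Q y y])
  also have "\<dots> = y 1 * (pair (simple_root 1) y * Q (simple_root 1))
                  + y 2 * (pair (simple_root 2) y * Q (simple_root 2))
                  + y 3 * (pair (simple_root 3) y * Q (simple_root 3))
                  + y 4 * (pair (simple_root 4) y * Q (simple_root 4))"
    using B[of 1] B[of 2] B[of 3] B[of 4] by simp
  also have "\<dots> = 2 * (Q (simple_root 1) * Q_F4 y)"
    using Q_simple_coroots[OF Q W]
    by (simp add: pair_Cartan simple_root_def Q_F4_def algebra_simps power2_eq_square)
  finally show ?thesis by simp
qed

section \<open>The integers tilde n_alpha\<close>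

lemma dvd_mult_iff_div_gcd_dvd:
  fixes n c k :: int
  assumes "n \<noteq> 0"
  shows "n dvd k * c \<longleftrightarrow> n div gcd n c dvd k"
proof -
  define g where "g = gcd n c"
  have "g \<noteq> 0" using assms by (simp add: g_def)
  have n: "n = g * (n div g)" and c: "c = g * (c div g)" by (simp_all add: g_def)
  have "n dvd k * c \<longleftrightarrow> g * (n div g) dvd g * (k * (c div g))"
    using n c by (metis mult.left_commute)
  also have "\<dots> \<longleftrightarrow> n div g dvd k * (c div g)" using \<open>g \<noteq> 0\<close> by simp
  also have "\<dots> \<longleftrightarrow> n div g dvd k"
    using div_gcd_coprime[of n c] assms by (simp add: g_def coprime_dvd_mult_left_iff)
  finally show ?thesis by (simp add: g_def)
qed

lemma Least_pos_dvd_mult: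
  fixes n c :: int
  assumes "0 < n"
  shows "(LEAST k::nat. 0 < k \<and> n dvd int k * c) = nat (n div gcd n c)"
proof -
  define m where "m = n div gcd n c"
  have "0 < m"
    using assms unfolding m_def by (simp add: pos_imp_zdiv_pos_iff zdvd_imp_le)
  have "n dvd int k * c \<longleftrightarrow> m dvd int k" for k
    using assms by (simp add: m_def dvd_mult_iff_div_gcd_dvd)
  then show ?thesis
    unfolding m_def[symmetric]
  proof (intro Least_equality)
    show "0 < nat m \<and> n dvd int (nat m) * c" if "\<And>k. n dvd int k * c \<longleftrightarrow> m dvd int k" for k
      using that[of "nat m"] \<open>0 < m\<close> by simp
  next
    fix k :: nat
    assume "0 < k \<and> n dvd int k * c" and "\<And>k. n dvd int k * c \<longleftrightarrow> m dvd int k"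
    then show "nat m \<le> k" using zdvd_imp_le[of m "int k"] by simp
  qed
qed

lemma YQn_iff:
  assumes Q: "quadratic_form Q" and y: "y \<in> Ylat"
  shows "y \<in> YQn Q n \<longleftrightarrow> (\<forall>j\<in>{1..4}. int n dvd BQ Q y (simple_root j))"
proof
  assume "y \<in> YQn Q n"
  then show "\<forall>j\<in>{1..4}. int n dvd BQ Q y (simple_root j)"
    by (simp add: YQn_def simple_root_in_Ylat)
next
  assume h: "\<forall>j\<in>{1..4}. int n dvd BQ Q y (simple_root j)"
  have "int n dvd BQ Q y z" if z: "z \<in> Ylat" for z
  proof -
    have "BQ Q y z = z 1 * BQ Q y (simple_root 1) + z 2 * BQ Q y (simple_root 2)
                   + z 3 * BQ Q y (simple_root 3) + z 4 * BQ Q y (simple_root 4)"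
      using BQ_expand_left[OF Q z y] BQ_commute[of Q] by metis
    then show ?thesis using h unfolding one_to_four by simp
  qed
  then show "y \<in> YQn Q n" using y by (simp add: YQn_def)
qed

lemma smul_coroot_in_YQn_iff:
  assumes Q: "quadratic_form Q" and W: "weyl_invariant Q" and a: "a \<in> F4_pos_roots"
  shows "smul k (coroot a) \<in> YQn Q n \<longleftrightarrow> int n dvd k * Q (coroot a)"
proof -
  have c: "coroot a \<in> Ylat" using a by (intro coroot_in_Ylat F4_pos_roots_in_Ylat)
  have "smul k (coroot a) \<in> YQn Q n
          \<longleftrightarrow> (\<forall>j\<in>{1..4}. int n dvd k * (pair a (simple_root j) * Q (coroot a)))"
    using YQn_iff[OF Q smul_in_Ylat[OF c]]
    by (simp add: BQ_smul_left[OF Q c] BQ_coroot_left[OF Q W a] simple_root_in_Ylat)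
  also have "\<dots> \<longleftrightarrow> int n dvd k * Q (coroot a)"
  proof
    assume all: "\<forall>j\<in>{1..4}. int n dvd k * (pair a (simple_root j) * Q (coroot a))"
    obtain j where "j \<in> {1..4}" and unit: "\<bar>pair a (simple_root j)\<bar> = 1"
      using pair_simple_coroot_unit[OF a] by blast
    then have "int n dvd k * (pair a (simple_root j) * Q (coroot a))" using all by blast
    moreover have "pair a (simple_root j) = 1 \<or> pair a (simple_root j) = -1" using unit by arith
    ultimately show "int n dvd k * Q (coroot a)" by auto
  qed (simp add: mult.left_commute[of k])
  finally show ?thesis .
qed

lemma n_til_eq_n_al:
  assumes "quadratic_form Q" "weyl_invariant Q" "1 \<le> n" "a \<in> F4_pos_roots"
  shows "n_til Q n a = n_al Q n a"
  using assms Least_pos_dvd_mult[of "int n" "Q (coroot a)"]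
  by (simp add: n_til_def n_al_def smul_coroot_in_YQn_iff)

lemma n_al_F4_pos_root:
  assumes Q: "quadratic_form Q" and W: "weyl_invariant Q" and a: "a \<in> F4_pos_roots"
  shows "n_al Q n a = n_al Q n (simple_root (if long_root a then 1 else 4))"
proof -
  have "Q (coroot a) = Q (coroot (simple_root (if long_root a then 1 else 4)))"
    using Q_eq_Q_F4[OF Q W] Q_F4_coroot[OF a] Q_simple_coroots(3)[OF Q W]
      coroot_simple_root coroot_in_Ylat F4_pos_roots_in_Ylat[OF a]
    by simp
  then show ?thesis by (simp add: n_al_def)
qed

definition height :: "vec \<Rightarrow> int" where
  "height a = (\<Sum>i\<in>{1..4}. a i)"

text \<open>f_X(a^vee) and f_Y(a) when tilde n equals N1 on long and N4 on short roots.\<close>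

definition fX_explicit :: "nat \<Rightarrow> nat \<Rightarrow> vec \<Rightarrow> rat" where
  "fX_explicit N1 N4 a =
     of_int (coroot a 1 + coroot a 2) / of_nat N1 + of_int (coroot a 3 + coroot a 4) / of_nat N4"

definition fY_explicit :: "nat \<Rightarrow> nat \<Rightarrow> vec \<Rightarrow> rat" where
  "fY_explicit N1 N4 a = of_int (height a) / of_nat (if long_root a then N1 else N4)"

lemma fX_eq_fX_explicit:
  assumes "1 \<le> n" "quadratic_form Q" "weyl_invariant Q"
  shows "fX Q n (coroot a) = fX_explicit (n_al Q n (simple_root 1)) (n_al Q n (simple_root 4)) a"
proof -
  have n_til: "n_til Q n (simple_root i) = n_al Q n (simple_root (if long_root (simple_root i) then 1 else 4))"
    if "i \<in> {1..4}" for i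
    using that by (intro trans[OF n_til_eq_n_al n_al_F4_pos_root] assms simple_root_in_F4_pos_roots)
  have "long_root (simple_root 1)" "long_root (simple_root 2)"
    "\<not> long_root (simple_root 3)" "\<not> long_root (simple_root 4)"
    using simple_root_v4 by (simp_all add: long_root_def rip_self_v4)
  then show ?thesis
    using n_til[of 1] n_til[of 2] n_til[of 3] n_til[of 4]
    unfolding fX_def fX_explicit_def sum_1_to_4 by (simp add: add_divide_distrib)
qed

lemma fY_eq_fY_explicit:
  assumes "1 \<le> n" "quadratic_form Q" "weyl_invariant Q" "a \<in> F4_pos_roots"
  shows "fY Q n a = fY_explicit (n_al Q n (simple_root 1)) (n_al Q n (simple_root 4)) a"
  using n_til_eq_n_al[OF assms(2,3,1,4)] n_al_F4_pos_root[OF assms(2,3,4)]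
  by (simp add: fY_def fY_explicit_def height_def)

lemma coroot_weighted_height:
  "a \<in> F4_pos_roots \<Longrightarrow>
     coroot a 1 + coroot a 2 + 2 * (coroot a 3 + coroot a 4) = (if long_root a then 1 else 2) * height a"
  unfolding F4_pos_roots_def height_def one_to_four by (auto simp: long_root_def coroot_v4 rip_self_v4)

lemma fX_explicit_eq_fY_explicit:
  assumes "a \<in> F4_pos_roots"
  shows "fX_explicit (2 * N) N a = fY_explicit (2 * N) N a"
proof -
  have "fX_explicit (2 * N) N a
        = of_int (coroot a 1 + coroot a 2 + 2 * (coroot a 3 + coroot a 4)) / of_nat (2 * N)"
    by (simp add: fX_explicit_def add_divide_distrib)
  also have "\<dots> = of_int ((if long_root a then 1 else 2) * height a) / of_nat (2 * N)"
    by (simp only: coroot_weighted_height[OF assms])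
  also have "\<dots> = fY_explicit (2 * N) N a"
    by (simp add: fY_explicit_def)
  finally show ?thesis .
qed

lemma weighted_height_image:
  "(\<lambda>a. (if long_root a then 1 else 2) * height a) ` F4_pos_roots = (*) 2 ` {1..8} \<union> {1, 3, 5, 7, 9, 11}"
proof -
  have "{1..8::int} = {1, 2, 3, 4, 5, 6, 7, 8}" by (rule set_eqI) (simp; presburger)
  then show ?thesis
    unfolding F4_pos_roots_def height_def one_to_four by (simp add: long_root_def rip_self_v4 insert_commute)
qed

lemma fY_explicit_image_ratio_two:
  "fY_explicit (2 * N) N ` F4_pos_roots
     = (\<lambda>k. of_int k / of_nat N) ` {1..8} \<union> (\<lambda>k. of_int k / of_nat (2 * N)) ` {1, 3, 5, 7, 9, 11}"
proof -
  have "fY_explicit (2 * N) N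
        = (\<lambda>k. of_int k / of_nat (2 * N)) \<circ> (\<lambda>a. (if long_root a then 1 else 2) * height a)"
    by (simp add: fun_eq_iff fY_explicit_def)
  then have "fY_explicit (2 * N) N ` F4_pos_roots
             = (\<lambda>k. of_int k / of_nat (2 * N)) ` ((*) 2 ` {1..8} \<union> {1, 3, 5, 7, 9, 11})"
    by (simp only: image_comp[symmetric] weighted_height_image)
  then show ?thesis by (simp add: image_Un image_image)
qed

lemma height_image: "height ` F4_pos_roots = {1..11}"
proof -
  have "{1..11::int} = {1, 2, 3, 4, 5, 6, 7, 8, 9, 10, 11}" by (rule set_eqI) (simp; presburger)
  then show ?thesis unfolding F4_pos_roots_def height_def one_to_four by (simp add: insert_commute)
qed

lemma coroot_height_image: "height ` coroot ` F4_pos_roots = {1..11}"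
proof -
  have "{1..11::int} = {1, 2, 3, 4, 5, 6, 7, 8, 9, 10, 11}" by (rule set_eqI) (simp; presburger)
  then show ?thesis
    unfolding F4_pos_roots_def height_def one_to_four by (simp add: coroot_v4 rip_self_v4 insert_commute)
qed

lemma fX_explicit_image_uniform: "fX_explicit N N ` F4_pos_roots = (\<lambda>k. of_int k / of_nat N) ` {1..11}"
proof -
  have "fX_explicit N N = (\<lambda>k. of_int k / of_nat N) \<circ> height \<circ> coroot"
    unfolding fX_explicit_def height_def sum_1_to_4 by (simp add: fun_eq_iff add_divide_distrib)
  then show ?thesis by (simp only: image_comp[symmetric] coroot_height_image)
qed

lemma fY_explicit_image_uniform: "fY_explicit N N ` F4_pos_roots = (\<lambda>k. of_int k / of_nat N) ` {1..11}"
proof -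
  have "fY_explicit N N = (\<lambda>k. of_int k / of_nat N) \<circ> height"
    by (simp add: fun_eq_iff fY_explicit_def)
  then show ?thesis by (simp only: image_comp[symmetric] height_image)
qed

theorem lemma3p5:
  fixes Q :: "vec \<Rightarrow> int" and n :: nat
  assumes "1 \<le> n" and "quadratic_form Q" and "weyl_invariant Q"
  shows "(n_al Q n (simple_root 1) = 2 * n_al Q n (simple_root 4) \<longrightarrow>
            fX Q n ` coroot ` F4_pos_roots = fY Q n ` F4_pos_roots \<and>
            fY Q n ` F4_pos_roots =
              (\<lambda>k::int. of_int k / of_nat (n_al Q n (simple_root 4))) ` {1..8} \<union>
              (\<lambda>k::int. of_int k / of_nat (2 * n_al Q n (simple_root 4))) ` {1, 3, 5, 7, 9, 11})
       \<and> ((\<forall>i\<in>{1..4}. \<forall>j\<in>{1..4}. n_al Q n (simple_root i) = n_al Q n (simple_root j)) \<longrightarrow>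
            fX Q n ` coroot ` F4_pos_roots = fY Q n ` F4_pos_roots \<and>
            fY Q n ` F4_pos_roots =
              (\<lambda>k::int. of_int k / of_nat (n_al Q n (simple_root 1))) ` {1..11})"
proof -
  define N1 N4 where "N1 = n_al Q n (simple_root 1)" and "N4 = n_al Q n (simple_root 4)"
  have fX_image: "fX Q n ` coroot ` F4_pos_roots = fX_explicit N1 N4 ` F4_pos_roots"
    using fX_eq_fX_explicit[OF assms] by (simp add: image_image N1_def N4_def)
  have fY_image: "fY Q n ` F4_pos_roots = fY_explicit N1 N4 ` F4_pos_roots"
    using fY_eq_fY_explicit[OF assms] by (intro image_cong) (simp_all add: N1_def N4_def)
  show ?thesis
  proof (intro conjI impI)
    assume "n_al Q n (simple_root 1) = 2 * n_al Q n (simple_root 4)"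
    then have N1: "N1 = 2 * N4" by (simp add: N1_def N4_def)
    show "fX Q n ` coroot ` F4_pos_roots = fY Q n ` F4_pos_roots"
      unfolding fX_image fY_image N1 using fX_explicit_eq_fY_explicit by (intro image_cong) simp_all
    show "fY Q n ` F4_pos_roots = (\<lambda>k::int. of_int k / of_nat (n_al Q n (simple_root 4))) ` {1..8}
        \<union> (\<lambda>k::int. of_int k / of_nat (2 * n_al Q n (simple_root 4))) ` {1, 3, 5, 7, 9, 11}"
      unfolding fY_image N1 N4_def[symmetric] by (rule fY_explicit_image_ratio_two)
  next
    assume uniform: "\<forall>i\<in>{1..4}. \<forall>j\<in>{1..4}. n_al Q n (simple_root i) = n_al Q n (simple_root j)"
    have N4: "N4 = N1" using uniform[rule_format, of 4 1] by (simp add: N1_def N4_def)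
    show "fX Q n ` coroot ` F4_pos_roots = fY Q n ` F4_pos_roots"
      unfolding fX_image fY_image N4 fX_explicit_image_uniform fY_explicit_image_uniform ..
    show "fY Q n ` F4_pos_roots = (\<lambda>k::int. of_int k / of_nat (n_al Q n (simple_root 1))) ` {1..11}"
      unfolding fY_image N4 N1_def by (rule fY_explicit_image_uniform)
  qed
qed

end
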